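(* Let $(G,\mathbf p)$ be a framework (with $\mathbf p$ pinned with $\ell$-dimensional affine span) and $E$ an energy that is stiff-bar at $\mathbf p$. An $\ell$-pinned configuration $\mathbf p'$ lies in the kernel of the Hessian $H_E(\mathbf p)$ of $E$ at $\mathbf p$ (as a function on $\ell$-pinned configuration space) if and only if $\mathbf p(t)=\mathbf p+\mathbf p't$ is a $(1,1)$-flex of $(G,\mathbf p)$ (or $\mathbf p'=0$), i.e. if and only if $\mathbf p'\in K$.
   Context: Fix a dimension $d$. A configuration is $\mathbf p=(\mathbf p_1,\dots,\mathbf p_n)$, $\mathbf p_i\in\mathbb R^d$; a framework $(G,\mathbf p)$ consists of a graph $G$ on $\{1,\dots,n\}$ and a configuration. A configuration $\mathbf q$ is in $\ell$-pinned position if $\mathbf q_1=0$ and, for $2\le i\le\ell+1$, $\mathbf q_i\in\mathrm{span}(e_1,\dots,e_{i-1})$; these form the $\ell$-pinned configuration space. $\mathbf p$ is pinned if it has $\ell$-dimensional affine span, $\mathbf p_1,\dots,\mathbf p_{\ell+1}$ are affinely independent, and $\mathbf p$ is in $\ell$-pinned position. A $(1,1)$-flex of $(G,\mathbf p)$ is an analytic non-constant $\ell$-pinned trajectory $\mathbf p(t)$, $\mathbf p(0)=\mathbf p$, with nonzero first derivative at $0$ and such that $\frac{d}{dt}|\mathbf p_i(t)-\mathbf p_j(t)|^2\big|_{t=0}=0$ for every edge $ij$. $K$ is the linear space of $\ell$-pinned $\mathbf p'$ with $(\mathbf p_v-\mathbf p_w)\cdot(\mathbf p'_v-\mathbf p'_w)=0$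 for all edges $vw$. A stiff-bar energy at $\mathbf p$ is $E(\mathbf q)=\sum_{ij\in E(G)}E_{ij}(|\mathbf q_i-\mathbf q_j|)$ on $\ell$-pinned configurations, where each $E_{ij}:\mathbb R\to\mathbb R$ is analytic at $d_{ij}=|\mathbf p_i-\mathbf p_j|\ne0$, has a strict local minimum at $d_{ij}$, and $E_{ij}''(d_{ij})>0$. *)

theory Defs
  imports "HOL-Analysis.Analysis"
begin

text \<open>Points live in real^'d::{finite,linorder}, where the finite index type 'd carries a linear
order; the coordinate k is the basis vector e_(crank k + 1) (crank is 0-based).
Vertices are 0,...,n-1 (vertex i here is vertex i+1 of the paper).
A configuration is a map nat => real^'d::{finite,linorder}, vanishing outside {..<n}.\<close>

definition crank :: "'d::{finite,linorder} \<Rightarrow> nat" where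
  "crank k = card {j. j < k}"

text \<open>l-pinned position: q_1 = 0 and q_i in span(e_1..e_(i-1)) for 2 <= i <= l+1
(paper indexing); here: for 0-based i <= l, all coordinates of rank >= i vanish.\<close>
definition pinned_pos :: "nat \<Rightarrow> nat \<Rightarrow> (nat \<Rightarrow> real^'d::{finite,linorder}) \<Rightarrow> bool" where
  "pinned_pos l n q \<longleftrightarrow> (\<forall>i. n \<le> i \<longrightarrow> q i = 0) \<and>
     (\<forall>i\<le>l. \<forall>k. i \<le> crank k \<longrightarrow> q i $ k = 0)"

definition pinned :: "nat \<Rightarrow> nat \<Rightarrow> (nat \<Rightarrow> real^'d::{finite,linorder}) \<Rightarrow> bool" where
  "pinned l n p \<longleftrightarrow> l + 1 \<le> n \<and> aff_dim (p ` {..<n}) = int l \<and>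
     inj_on p {..<l+1} \<and> \<not> affine_dependent (p ` {..<l+1}) \<and> pinned_pos l n p"

definition real_analytic_at :: "(real \<Rightarrow> real) \<Rightarrow> real \<Rightarrow> bool" where
  "real_analytic_at f x \<longleftrightarrow> (\<exists>r>0. \<exists>c::nat \<Rightarrow> real.
      \<forall>y. \<bar>y - x\<bar> < r \<longrightarrow> (\<lambda>k. c k * (y - x) ^ k) sums f y)"

definition graph_ok :: "nat \<Rightarrow> (nat \<times> nat) set \<Rightarrow> bool" where
  "graph_ok n Ed \<longleftrightarrow> (\<forall>(i,j)\<in>Ed. i < j \<and> j < n)"

definition stiff_bar :: "(nat \<times> nat) set \<Rightarrow> (nat \<Rightarrow> real^'d::{finite,linorder})
    \<Rightarrow> (nat \<Rightarrow> nat \<Rightarrow> real \<Rightarrow> real) \<Rightarrow> bool" where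
  "stiff_bar Ed p Ef \<longleftrightarrow> (\<forall>(i,j)\<in>Ed.
     let d = norm (p i - p j) in
       d \<noteq> 0 \<and> real_analytic_at (Ef i j) d \<and>
       (\<exists>r>0. \<forall>x. 0 < \<bar>x - d\<bar> \<and> \<bar>x - d\<bar> < r \<longrightarrow> Ef i j d < Ef i j x) \<and>
       deriv (deriv (Ef i j)) d > 0)"

definition energy :: "(nat \<times> nat) set \<Rightarrow> (nat \<Rightarrow> nat \<Rightarrow> real \<Rightarrow> real)
    \<Rightarrow> (nat \<Rightarrow> real^'d::{finite,linorder}) \<Rightarrow> real" where
  "energy Ed Ef q = (\<Sum>(i,j)\<in>Ed. Ef i j (norm (q i - q j)))"

definition hessian :: "((nat \<Rightarrow> real^'d::{finite,linorder}) \<Rightarrow> real) \<Rightarrow> (nat \<Rightarrow> real^'d::{finite,linorder})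
    \<Rightarrow> (nat \<Rightarrow> real^'d::{finite,linorder}) \<Rightarrow> (nat \<Rightarrow> real^'d::{finite,linorder}) \<Rightarrow> real" where
  "hessian E p u v = deriv (\<lambda>s. deriv (\<lambda>t. E (\<lambda>i. p i + s *\<^sub>R u i + t *\<^sub>R v i)) 0) 0"

definition hess_kernel :: "nat \<Rightarrow> nat \<Rightarrow> ((nat \<Rightarrow> real^'d::{finite,linorder}) \<Rightarrow> real)
    \<Rightarrow> (nat \<Rightarrow> real^'d::{finite,linorder}) \<Rightarrow> (nat \<Rightarrow> real^'d::{finite,linorder}) set" where
  "hess_kernel l n E p = {u. pinned_pos l n u \<and>
      (\<forall>v. pinned_pos l n v \<longrightarrow> hessian E p u v = 0)}"

definition Kspace :: "nat \<Rightarrow> nat \<Rightarrow> (nat \<times> nat) set \<Rightarrow> (nat \<Rightarrow> real^'d::{finite,linorder})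
    \<Rightarrow> (nat \<Rightarrow> real^'d::{finite,linorder}) set" where
  "Kspace l n Ed p = {u. pinned_pos l n u \<and>
      (\<forall>(i,j)\<in>Ed. (p i - p j) \<bullet> (u i - u j) = 0)}"

definition flex11 :: "nat \<Rightarrow> nat \<Rightarrow> (nat \<times> nat) set \<Rightarrow> (nat \<Rightarrow> real^'d::{finite,linorder})
    \<Rightarrow> (real \<Rightarrow> nat \<Rightarrow> real^'d::{finite,linorder}) \<Rightarrow> bool" where
  "flex11 l n Ed p P \<longleftrightarrow>
     (\<forall>i<n. \<forall>k. real_analytic_at (\<lambda>t. P t i $ k) 0) \<and>
     (\<forall>t. pinned_pos l n (P t)) \<and>
     (\<exists>t. P t \<noteq> P 0) \<and> P 0 = p \<and>
     (\<exists>i<n. vector_derivative (\<lambda>t. P t i) (at 0) \<noteq> 0) \<and>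
     (\<forall>(i,j)\<in>Ed. deriv (\<lambda>t. (norm (P t i - P t j))\<^sup>2) 0 = 0)"

end

theory Submission
  imports Defs
begin

text \<open>Each edge term E_ij has a strict local minimum at the rest length d_ij, so E_ij'(d_ij) = 0
and in the mixed second derivative of E_ij(|p_ij + s u_ij + t v_ij|) only the E_ij'' term survives.
Hence the Hessian is the form \<Sum> E_ij''(d_ij) / d_ij^2 (p_ij \<bullet> u_ij) (p_ij \<bullet> v_ij) with positive
weights; it is positive semidefinite, so u lies in its kernel iff H(u,u) = 0 iff p_ij \<bullet> u_ij = 0
on every edge, which is membership in K. The squared edge lengths along p + t u have derivative
2 p_ij \<bullet> u_ij at t = 0, so for u \<noteq> 0 the same condition says that p + t u is a (1,1)-flex.\<close>

lemma real_analytic_at_twice_DERIV: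
  assumes "real_analytic_at f d"
  obtains r where "r > 0"
    and "\<And>y. \<bar>y - d\<bar> < r \<Longrightarrow> (f has_real_derivative deriv f y) (at y)"
    and "\<And>y. \<bar>y - d\<bar> < r \<Longrightarrow> (deriv f has_real_derivative deriv (deriv f) y) (at y)"
proof -
  obtain r c where r: "r > 0" and c: "\<And>y. \<bar>y - d\<bar> < r \<Longrightarrow> (\<lambda>k. c k * (y - d) ^ k) sums f y"
    using assms unfolding real_analytic_at_def by blast
  define F where "F m z = (\<Sum>k. (diffs ^^ m) c k * z ^ k)" for m and z :: real
  have summable: "summable (\<lambda>k. (diffs ^^ m) c k * z ^ k)" if "norm z < r" for m z
    using that
  proof (induction m arbitrary: z)
    case 0
    then show ?case using c[of "d + z"] by (auto simp: sums_iff)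
  next
    case (Suc m)
    then show ?case by (auto intro: termdiff_converges)
  qed
  have DERIV_F: "((\<lambda>y. F m (y - d)) has_real_derivative F (Suc m) (y - d)) (at y)"
    if "\<bar>y - d\<bar> < r" for m y
  proof -
    have "(F m has_real_derivative F (Suc m) (y - d)) (at (y - d))"
      unfolding F_def funpow.simps comp_def
      by (rule termdiffs_strong'[where K = r]) (use summable that in auto)
    then have "((\<lambda>y. F m (y - d)) has_real_derivative F (Suc m) (y - d) * 1) (at y)"
      by (rule DERIV_chain2) (auto intro!: derivative_eq_intros)
    then show ?thesis by simp
  qed
  define S where "S = ball d r"
  have S: "open S" "y \<in> S \<longleftrightarrow> \<bar>y - d\<bar> < r" for y
    by (auto simp: S_def dist_real_def abs_minus_commute)
  have f_eq: "F 0 (y - d) = f y" if "y \<in> S" for y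
    using c[of y] that by (simp add: S F_def sums_iff)
  have Df: "(f has_real_derivative F 1 (y - d)) (at y)" if "y \<in> S" for y
    using has_field_derivative_transform_within_open[OF DERIV_F S(1) that f_eq] that S by simp
  have deriv_f_eq: "deriv f y = F 1 (y - d)" if "y \<in> S" for y
    using Df[OF that] by (rule DERIV_imp_deriv)
  have DDf: "(deriv f has_real_derivative F 2 (y - d)) (at y)" if "y \<in> S" for y
    using has_field_derivative_transform_within_open[OF DERIV_F S(1) that deriv_f_eq[symmetric]] that S
    by (simp add: numeral_2_eq_2)
  show thesis
  proof (rule that[OF r])
    fix y assume "\<bar>y - d\<bar> < r"
    then have "y \<in> S" using S by simp
    then show "(f has_real_derivative deriv f y) (at y)"
      and "(deriv f has_real_derivative deriv (deriv f) y) (at y)"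
      using Df DDf DERIV_imp_deriv by metis+
  qed
qed

lemma DERIV_norm_line:
  fixes b y :: "'a::real_inner"
  assumes "b \<noteq> 0"
  shows "((\<lambda>t. norm (b + t *\<^sub>R y)) has_real_derivative b \<bullet> y / norm b) (at 0)"
proof -
  have line: "((\<lambda>t. b + t *\<^sub>R y) has_derivative (\<lambda>t. t *\<^sub>R y)) (at 0)"
    by (auto intro!: derivative_eq_intros)
  have "(norm has_derivative (\<lambda>h. h \<bullet> sgn b)) (at ((\<lambda>t. b + t *\<^sub>R y) 0))"
    using has_derivative_norm[OF assms] by simp
  from has_derivative_compose[OF line this]
  have "((\<lambda>t. norm (b + t *\<^sub>R y)) has_derivative (\<lambda>t. (t *\<^sub>R y) \<bullet> sgn b)) (at 0)" .
  then show ?thesis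
    unfolding has_field_derivative_def
    by (rule has_derivative_eq_rhs) (auto simp: sgn_div_norm inner_commute field_simps)
qed

lemma mixed_partial_comp_norm:
  fixes a x y :: "'a::real_inner" and f :: "real \<Rightarrow> real"
  assumes a: "a \<noteq> 0" and r: "r > 0"
    and Df: "\<And>z. \<bar>z - norm a\<bar> < r \<Longrightarrow> (f has_real_derivative deriv f z) (at z)"
    and DDf: "(deriv f has_real_derivative f2) (at (norm a))"
    and critical: "deriv f (norm a) = 0"
  defines "h \<equiv> \<lambda>s. deriv f (norm (a + s *\<^sub>R x)) * ((a + s *\<^sub>R x) \<bullet> y / norm (a + s *\<^sub>R x))"
  shows "\<forall>\<^sub>F s in nhds 0. ((\<lambda>t. f (norm (a + s *\<^sub>R x + t *\<^sub>R y))) has_real_derivative h s) (at 0)"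
    and "(h has_real_derivative f2 * (a \<bullet> x) * (a \<bullet> y) / (norm a)\<^sup>2) (at 0)"
proof -
  have "((\<lambda>s. norm (a + s *\<^sub>R x)) \<longlongrightarrow> norm (a + 0 *\<^sub>R x)) (nhds 0)"
    by (intro tendsto_intros filterlim_ident)
  then have "\<forall>\<^sub>F s in nhds 0. dist (norm (a + s *\<^sub>R x)) (norm a) < min r (norm a)"
    using a r by (intro tendstoD) auto
  then show "\<forall>\<^sub>F s in nhds 0. ((\<lambda>t. f (norm (a + s *\<^sub>R x + t *\<^sub>R y))) has_real_derivative h s) (at 0)"
  proof eventually_elim
    case (elim s)
    define b where "b = a + s *\<^sub>R x"
    have near: "\<bar>norm b - norm a\<bar> < r" and b: "b \<noteq> 0"
      using elim by (auto simp: b_def dist_real_def)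
    have "((\<lambda>t. f (norm (b + t *\<^sub>R y))) has_real_derivative deriv f (norm b) * (b \<bullet> y / norm b)) (at 0)"
      by (rule DERIV_chain2[OF _ DERIV_norm_line[OF b]]) (use Df near in simp)
    then show ?case by (simp add: h_def b_def)
  qed
  have D1: "((\<lambda>s. deriv f (norm (a + s *\<^sub>R x))) has_real_derivative f2 * (a \<bullet> x / norm a)) (at 0)"
    by (rule DERIV_chain2[OF _ DERIV_norm_line[OF a]]) (use DDf in simp)
  have D2: "((\<lambda>s. (a + s *\<^sub>R x) \<bullet> y) has_real_derivative x \<bullet> y) (at 0)"
    unfolding inner_add_left inner_scaleR_left by (auto intro!: derivative_eq_intros)
  have "norm (a + 0 *\<^sub>R x) \<noteq> 0" using a by simp
  \<comment> \<open>The product-rule term containing the derivative of the second factor vanishes by \<open>critical\<close>.\<close>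
  from DERIV_mult[OF D1 DERIV_divide[OF D2 DERIV_norm_line[OF a] this]]
  show "(h has_real_derivative f2 * (a \<bullet> x) * (a \<bullet> y) / (norm a)\<^sup>2) (at 0)"
    unfolding h_def by (rule DERIV_cong) (use a critical in \<open>simp add: power2_eq_square\<close>)
qed

lemma deriv_deriv_sum:
  fixes G :: "'e \<Rightarrow> real \<Rightarrow> real \<Rightarrow> real"
  assumes "finite A"
    and "\<And>e. e \<in> A \<Longrightarrow> \<forall>\<^sub>F s in nhds s0. ((\<lambda>t. G e s t) has_real_derivative H e s) (at t0)"
    and "\<And>e. e \<in> A \<Longrightarrow> (H e has_real_derivative c e) (at s0)"
  shows "deriv (\<lambda>s. deriv (\<lambda>t. \<Sum>e\<in>A. G e s t) t0) s0 = (\<Sum>e\<in>A. c e)"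
proof -
  have "\<forall>\<^sub>F s in nhds s0. \<forall>e\<in>A. ((\<lambda>t. G e s t) has_real_derivative H e s) (at t0)"
    using assms by (intro eventually_ball_finite) auto
  then have inner: "\<forall>\<^sub>F s in nhds s0. deriv (\<lambda>t. \<Sum>e\<in>A. G e s t) t0 = (\<Sum>e\<in>A. H e s)"
    by eventually_elim (auto intro!: DERIV_imp_deriv DERIV_sum)
  have "((\<lambda>s. \<Sum>e\<in>A. H e s) has_real_derivative (\<Sum>e\<in>A. c e)) (at s0)"
    using assms by (intro DERIV_sum) auto
  then have "((\<lambda>s. deriv (\<lambda>t. \<Sum>e\<in>A. G e s t) t0) has_real_derivative (\<Sum>e\<in>A. c e)) (at s0)"
    using DERIV_cong_ev[OF refl inner refl] by simp
  then show ?thesis by (rule DERIV_imp_deriv)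
qed

lemma strict_local_min_imp_DERIV_zero:
  fixes f :: "real \<Rightarrow> real"
  assumes "(f has_real_derivative D) (at x)"
    and "\<exists>r>0. \<forall>y. 0 < \<bar>y - x\<bar> \<and> \<bar>y - x\<bar> < r \<longrightarrow> f x < f y"
  shows "D = 0"
proof -
  obtain r where r: "r > 0" and min: "\<And>y. 0 < \<bar>y - x\<bar> \<Longrightarrow> \<bar>y - x\<bar> < r \<Longrightarrow> f x < f y"
    using assms(2) by blast
  have "\<forall>y. \<bar>x - y\<bar> < r \<longrightarrow> f x \<le> f y"
  proof (intro allI impI)
    fix y assume "\<bar>x - y\<bar> < r"
    then show "f x \<le> f y"
      using min[of y] by (cases "y = x") (auto simp: abs_minus_commute)
  qed
  then show ?thesis using DERIV_local_min[OF assms(1) r] by blast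
qed

lemma hessian_energy:
  fixes p u v :: "nat \<Rightarrow> real^'d::{finite,linorder}"
  assumes fin: "finite Ed" and stiff: "stiff_bar Ed p Ef"
  shows "hessian (energy Ed Ef) p u v =
    (\<Sum>(i,j)\<in>Ed. deriv (deriv (Ef i j)) (norm (p i - p j)) * ((p i - p j) \<bullet> (u i - u j))
        * ((p i - p j) \<bullet> (v i - v j)) / (norm (p i - p j))\<^sup>2)"
proof -
  define G where "G e s t = (case e of (i, j) \<Rightarrow>
    Ef i j (norm (p i - p j + s *\<^sub>R (u i - u j) + t *\<^sub>R (v i - v j))))" for e s t
  define c where "c e = (case e of (i, j) \<Rightarrow>
    deriv (deriv (Ef i j)) (norm (p i - p j)) * ((p i - p j) \<bullet> (u i - u j))
        * ((p i - p j) \<bullet> (v i - v j)) / (norm (p i - p j))\<^sup>2)" for e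
  have "\<exists>h. (\<forall>\<^sub>F s in nhds 0. ((\<lambda>t. G e s t) has_real_derivative h s) (at 0))
      \<and> (h has_real_derivative c e) (at 0)" if "e \<in> Ed" for e
  proof -
    obtain i j where e: "e = (i, j)" by force
    define a where "a = p i - p j"
    have a: "a \<noteq> 0" and analytic: "real_analytic_at (Ef i j) (norm a)"
      and min: "\<exists>r>0. \<forall>y. 0 < \<bar>y - norm a\<bar> \<and> \<bar>y - norm a\<bar> < r \<longrightarrow> Ef i j (norm a) < Ef i j y"
      using stiff that unfolding stiff_bar_def e a_def by (auto simp: Let_def)
    obtain r where r: "r > 0"
      and Df: "\<And>y. \<bar>y - norm a\<bar> < r \<Longrightarrow> (Ef i j has_real_derivative deriv (Ef i j) y) (at y)"
      and DDf_near: "\<And>y. \<bar>y - norm a\<bar> < r \<Longrightarrow>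
        (deriv (Ef i j) has_real_derivative deriv (deriv (Ef i j)) y) (at y)"
      using real_analytic_at_twice_DERIV[OF analytic] by blast
    have DDf: "(deriv (Ef i j) has_real_derivative deriv (deriv (Ef i j)) (norm a)) (at (norm a))"
      using DDf_near r by simp
    have "deriv (Ef i j) (norm a) = 0"
      using strict_local_min_imp_DERIV_zero[OF Df min] r by simp
    from mixed_partial_comp_norm[OF a r Df DDf this, of "u i - u j" "v i - v j"]
    show ?thesis unfolding G_def c_def e a_def by auto
  qed
  then obtain H where "\<And>e. e \<in> Ed \<Longrightarrow> \<forall>\<^sub>F s in nhds 0. ((\<lambda>t. G e s t) has_real_derivative H e s) (at 0)"
    and "\<And>e. e \<in> Ed \<Longrightarrow> (H e has_real_derivative c e) (at 0)"
    by metis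
  from deriv_deriv_sum[OF fin this]
  have "deriv (\<lambda>s. deriv (\<lambda>t. \<Sum>e\<in>Ed. G e s t) 0) 0 = (\<Sum>e\<in>Ed. c e)" .
  moreover have "energy Ed Ef (\<lambda>i. p i + s *\<^sub>R u i + t *\<^sub>R v i) = (\<Sum>e\<in>Ed. G e s t)" for s t
    unfolding energy_def G_def by (intro sum.cong) (auto simp: algebra_simps)
  ultimately show ?thesis
    unfolding hessian_def c_def by simp
qed

lemma hess_kernel_energy_eq_Kspace:
  fixes p :: "nat \<Rightarrow> real^'d::{finite,linorder}"
  assumes "finite Ed" and stiff: "stiff_bar Ed p Ef"
  shows "hess_kernel l n (energy Ed Ef) p = Kspace l n Ed p"
proof -
  define w where "w i j = deriv (deriv (Ef i j)) (norm (p i - p j)) / (norm (p i - p j))\<^sup>2" for i j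
  have w_pos: "w i j > 0" if "(i, j) \<in> Ed" for i j
    using stiff that unfolding stiff_bar_def w_def by (auto simp: Let_def)
  have hessian: "hessian (energy Ed Ef) p u v =
      (\<Sum>(i,j)\<in>Ed. w i j * ((p i - p j) \<bullet> (u i - u j)) * ((p i - p j) \<bullet> (v i - v j)))" for u v
    unfolding hessian_energy[OF assms] w_def by (intro sum.cong) auto
  show ?thesis
  proof (intro set_eqI iffI)
    fix u assume u: "u \<in> hess_kernel l n (energy Ed Ef) p"
    define a where "a i j = (p i - p j) \<bullet> (u i - u j)" for i j
    have "(\<Sum>(i,j)\<in>Ed. w i j * a i j * a i j) = 0"
      using u unfolding hess_kernel_def hessian a_def by blast
    moreover have nonneg: "0 \<le> (case e of (i, j) \<Rightarrow> w i j * a i j * a i j)" if "e \<in> Ed" for e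
      using w_pos that by (auto simp: mult.assoc less_imp_le split: prod.split)
    ultimately have "\<forall>e\<in>Ed. (case e of (i, j) \<Rightarrow> w i j * a i j * a i j) = 0"
      using sum_nonneg_eq_0_iff[OF \<open>finite Ed\<close> nonneg] by simp
    then have "a i j = 0" if "(i, j) \<in> Ed" for i j
      using that w_pos[OF that] by fastforce
    then have "\<forall>(i,j)\<in>Ed. a i j = 0"
      by blast
    with u show "u \<in> Kspace l n Ed p"
      unfolding hess_kernel_def Kspace_def a_def by blast
  next
    fix u assume "u \<in> Kspace l n Ed p"
    then show "u \<in> hess_kernel l n (energy Ed Ef) p"
      unfolding hess_kernel_def Kspace_def hessian by (auto intro!: sum.neutral)
  qed
qed

lemma real_analytic_at_affine: "real_analytic_at (\<lambda>t. a + t * b) x"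
proof -
  define c :: "nat \<Rightarrow> real" where "c k = (if k = 0 then a + x * b else if k = 1 then b else 0)" for k
  have "(\<lambda>k. c k * (y - x) ^ k) sums (\<Sum>k\<in>{0, 1}. c k * (y - x) ^ k)" for y
    by (rule sums_finite) (auto simp: c_def)
  moreover have "(\<Sum>k\<in>{0, 1}. c k * (y - x) ^ k) = a + y * b" for y
    by (simp add: c_def algebra_simps)
  ultimately have "(\<lambda>k. c k * (y - x) ^ k) sums (a + y * b)" for y
    by metis
  then show ?thesis
    unfolding real_analytic_at_def using zero_less_one by blast
qed

lemma deriv_norm_sq_line:
  fixes a x :: "'a::real_inner"
  shows "deriv (\<lambda>t. (norm (a + t *\<^sub>R x))\<^sup>2) 0 = 2 * (a \<bullet> x)"
proof -
  have "(norm (a + t *\<^sub>R x))\<^sup>2 = a \<bullet> a + 2 * t * (a \<bullet> x) + t\<^sup>2 * (x \<bullet> x)" for t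
    unfolding power2_norm_eq_inner
    by (simp add: inner_commute power2_eq_square algebra_simps)
  moreover have "((\<lambda>t. a \<bullet> a + 2 * t * (a \<bullet> x) + t\<^sup>2 * (x \<bullet> x)) has_real_derivative 2 * (a \<bullet> x)) (at 0)"
    by (auto intro!: derivative_eq_intros)
  ultimately show ?thesis by (simp add: DERIV_imp_deriv)
qed

lemma flex11_affine_iff:
  fixes p u :: "nat \<Rightarrow> real^'d::{finite,linorder}"
  assumes pp: "pinned_pos l n p" and pu: "pinned_pos l n u"
  shows "flex11 l n Ed p (\<lambda>t i. p i + t *\<^sub>R u i) \<longleftrightarrow>
     u \<noteq> (\<lambda>i. 0) \<and> (\<forall>(i,j)\<in>Ed. (p i - p j) \<bullet> (u i - u j) = 0)"
proof -
  have analytic: "real_analytic_at (\<lambda>t. (p i + t *\<^sub>R u i) $ k) 0" for i k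
    using real_analytic_at_affine by simp
  have pinned: "pinned_pos l n (\<lambda>i. p i + t *\<^sub>R u i)" for t
    using pp pu unfolding pinned_pos_def by simp
  have moving: "(\<exists>t. (\<lambda>i. p i + t *\<^sub>R u i) \<noteq> (\<lambda>i. p i + 0 *\<^sub>R u i)) \<longleftrightarrow> u \<noteq> (\<lambda>i. 0)"
  proof
    assume "u \<noteq> (\<lambda>i. 0)"
    then obtain i where "u i \<noteq> 0" by auto
    then show "\<exists>t. (\<lambda>i. p i + t *\<^sub>R u i) \<noteq> (\<lambda>i. p i + 0 *\<^sub>R u i)"
      by (intro exI[of _ 1]) (auto dest: fun_cong[of _ _ i])
  qed auto
  have "vector_derivative (\<lambda>t. p i + t *\<^sub>R u i) (at 0) = u i" for i
    by (rule vector_derivative_at) (auto intro!: derivative_eq_intros)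
  then have velocity: "(\<exists>i<n. vector_derivative (\<lambda>t. p i + t *\<^sub>R u i) (at 0) \<noteq> 0) \<longleftrightarrow> u \<noteq> (\<lambda>i. 0)"
    using pu unfolding pinned_pos_def by (metis not_le)
  have "p i + t *\<^sub>R u i - (p j + t *\<^sub>R u j) = (p i - p j) + t *\<^sub>R (u i - u j)" for i j t
    by (simp add: algebra_simps)
  then have edge_rate: "deriv (\<lambda>t. (norm (p i + t *\<^sub>R u i - (p j + t *\<^sub>R u j)))\<^sup>2) 0
      = 2 * ((p i - p j) \<bullet> (u i - u j))" for i j
    by (simp only: deriv_norm_sq_line)
  show ?thesis
    unfolding flex11_def using analytic pinned moving velocity by (simp add: edge_rate)
qed

lemma graph_ok_finite: "graph_ok n Ed \<Longrightarrow> finite Ed"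
  unfolding graph_ok_def by (rule finite_subset[of _ "{..<n} \<times> {..<n}"]) auto

theorem lemma7p1:
  fixes p u :: "nat \<Rightarrow> real^'d::{finite,linorder}"
    and Ed :: "(nat \<times> nat) set" and Ef :: "nat \<Rightarrow> nat \<Rightarrow> real \<Rightarrow> real"
    and n l :: nat
  assumes "graph_ok n Ed"
    and "pinned l n p"
    and "stiff_bar Ed p Ef"
    and "pinned_pos l n u"
  shows "(u \<in> hess_kernel l n (energy Ed Ef) p \<longleftrightarrow>
            (u = (\<lambda>i. 0) \<or> flex11 l n Ed p (\<lambda>t i. p i + t *\<^sub>R u i)))
       \<and> (u \<in> hess_kernel l n (energy Ed Ef) p \<longleftrightarrow> u \<in> Kspace l n Ed p)"
proof -
  have kernel: "hess_kernel l n (energy Ed Ef) p = Kspace l n Ed p"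
    using hess_kernel_energy_eq_Kspace[OF graph_ok_finite] assms(1,3) .
  have "pinned_pos l n p"
    using assms(2) unfolding pinned_def by simp
  then have "(u = (\<lambda>i. 0) \<or> flex11 l n Ed p (\<lambda>t i. p i + t *\<^sub>R u i)) \<longleftrightarrow> u \<in> Kspace l n Ed p"
    using flex11_affine_iff[OF _ assms(4)] assms(4) unfolding Kspace_def by auto
  with kernel show ?thesis by simp
qed

end
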